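(* Let $t\ge1$, $F=\mathbb{F}_{2^t}$, $A\subseteq F$ and $\alpha^*\in A$. Let $z_1,\dots,z_t\in F$ be such that $\beta_i:=\alpha^*-z_i$, $i=1,\dots,t$, form a basis of $F$ over $\mathbb{F}_2$, and let $g_i(x)=\beta_i(x-z_i)$. Then for every $\alpha\in A\setminus\{\alpha^*\}$, $\mathrm{rank}_{\mathbb{F}_2}\{g_1(\alpha),\dots,g_t(\alpha)\}\le t-1$. *)

theory Defs
  imports Main
begin

text \<open>A field of characteristic 2 is a vector space over F_2; an F_2-linear
combination of a family is a sum of a subfamily (coefficients in {0,1}).\<close>

definition f2_comb :: "(nat \<Rightarrow> 'a::field) \<Rightarrow> nat \<Rightarrow> (nat \<Rightarrow> bool) \<Rightarrow> 'a" where
  "f2_comb b t c = (\<Sum>i\<in>{1..t}. if c i then b i else 0)"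

definition f2_basis :: "(nat \<Rightarrow> 'a::field) \<Rightarrow> nat \<Rightarrow> bool" where
  "f2_basis b t \<longleftrightarrow>
     (\<forall>c. f2_comb b t c = 0 \<longrightarrow> (\<forall>i\<in>{1..t}. \<not> c i)) \<and>
     (\<forall>x. \<exists>c. x = f2_comb b t c)"

definition f2_indep :: "'a::field set \<Rightarrow> bool" where
  "f2_indep T \<longleftrightarrow> finite T \<and> (\<forall>U\<subseteq>T. U \<noteq> {} \<longrightarrow> \<Sum>U \<noteq> 0)"

definition f2_rank :: "'a::field set \<Rightarrow> nat" where
  "f2_rank S = Max {card T | T. T \<subseteq> S \<and> f2_indep T}"

end

theory Submission
  imports Defs
begin

text \<open>Put d = \<alpha> - \<alpha>s. Since \<alpha> - z i = \<beta> i + d, every g i \<alpha> = \<beta> i * (\<beta> i + d) lies in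
  the image of L x = x * (x + d). In characteristic 2, L is additive with kernel {0, d}, so its
  image is an F_2-subspace with 2^(t-1) elements. An independent set T inside it has 2^|T|
  distinct subset sums, all in the image, so |T| \<le> t - 1.\<close>

lemma add_self_eq_zero_char2:
  fixes x :: "'a::ring_1"
  assumes "(1::'a) + 1 = 0"
  shows "x + x = 0"
proof -
  have "(1 + 1) * x = 0" using assms by (simp only: mult_zero_left)
  then show ?thesis by (simp only: distrib_right mult_1)
qed

lemma sum_subset_closed:
  fixes S :: "'a::comm_monoid_add set"
  assumes "0 \<in> S" "\<And>a b. a \<in> S \<Longrightarrow> b \<in> S \<Longrightarrow> a + b \<in> S" "finite U" "U \<subseteq> S"
  shows "\<Sum>U \<in> S"
  using assms(3,4) by (induction U rule: finite_induct) (use assms(1,2) in auto)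

lemma sum_add_sum_eq_sum_symdiff_char2:
  fixes U V :: "'a::ring_1 set"
  assumes "(1::'a) + 1 = 0" "finite U" "finite V"
  shows "\<Sum>U + \<Sum>V = \<Sum>((U - V) \<union> (V - U))"
proof -
  have "\<Sum>U = \<Sum>(U - V) + \<Sum>(U \<inter> V)" "\<Sum>V = \<Sum>(V - U) + \<Sum>(U \<inter> V)"
    using assms(2,3) by (metis Int_commute sum.Int_Diff add.commute)+
  moreover have "\<Sum>(U \<inter> V) + \<Sum>(U \<inter> V) = 0"
    using add_self_eq_zero_char2[OF assms(1)] .
  moreover have "\<Sum>((U - V) \<union> (V - U)) = \<Sum>(U - V) + \<Sum>(V - U)"
    using assms(2,3) by (intro sum.union_disjoint) auto
  ultimately show ?thesis by (simp add: algebra_simps)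
qed

lemma inj_on_Sum_Pow_f2_indep:
  fixes T :: "'a::field set"
  assumes "(1::'a) + 1 = 0" "f2_indep T"
  shows "inj_on Sum (Pow T)"
proof (rule inj_onI)
  fix U V assume U: "U \<in> Pow T" and V: "V \<in> Pow T" and eq: "\<Sum>U = \<Sum>V"
  have fin: "finite U" "finite V"
    using U V assms(2) finite_subset unfolding f2_indep_def by auto
  have "\<Sum>((U - V) \<union> (V - U)) = \<Sum>V + \<Sum>V"
    using sum_add_sum_eq_sum_symdiff_char2[OF assms(1) fin] eq by simp
  also have "\<dots> = 0" using add_self_eq_zero_char2[OF assms(1)] .
  finally have "\<Sum>((U - V) \<union> (V - U)) = 0" .
  moreover have "(U - V) \<union> (V - U) \<subseteq> T" using U V by blast
  ultimately have "(U - V) \<union> (V - U) = {}"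
    using assms(2) unfolding f2_indep_def by blast
  then show "U = V" by blast
qed

lemma two_pow_card_f2_indep_le_card:
  fixes S T :: "'a::{field,finite} set"
  assumes "(1::'a) + 1 = 0" "f2_indep T" "T \<subseteq> S"
    and "0 \<in> S" "\<And>a b. a \<in> S \<Longrightarrow> b \<in> S \<Longrightarrow> a + b \<in> S"
  shows "2 ^ card T \<le> card S"
proof -
  have fin: "finite T" using assms(2) unfolding f2_indep_def by simp
  have "Sum ` Pow T \<subseteq> S"
    using assms(3-5) fin sum_subset_closed[of S] by (auto intro: finite_subset)
  then have "card (Sum ` Pow T) \<le> card S" by (simp add: card_mono)
  moreover have "card (Sum ` Pow T) = 2 ^ card T"
    using card_image[OF inj_on_Sum_Pow_f2_indep[OF assms(1,2)]] fin by (simp add: card_Pow)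
  ultimately show ?thesis by simp
qed

lemma f2_rank_le_of_subset_closed:
  fixes G S :: "'a::{field,finite} set"
  assumes "(1::'a) + 1 = 0" "card S \<le> 2 ^ n" "G \<subseteq> S"
    and "0 \<in> S" "\<And>a b. a \<in> S \<Longrightarrow> b \<in> S \<Longrightarrow> a + b \<in> S"
  shows "f2_rank G \<le> n"
proof -
  let ?C = "{card T | T. T \<subseteq> G \<and> f2_indep T}"
  have bound: "c \<le> n" if "c \<in> ?C" for c
  proof -
    obtain T where T: "c = card T" "T \<subseteq> G" "f2_indep T" using \<open>c \<in> ?C\<close> by blast
    have "2 ^ card T \<le> (2::nat) ^ n"
      using two_pow_card_f2_indep_le_card[OF assms(1) T(3) _ assms(4,5)] T(2) assms(2,3)
      by (meson order_trans)
    then show ?thesis using T(1) by simp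
  qed
  have "finite ?C" using bound by (meson finite_atMost finite_subset subsetI atMost_iff)
  moreover have "card {} \<in> ?C" by (force simp: f2_indep_def)
  ultimately show ?thesis unfolding f2_rank_def using bound by (subst Max_le_iff) auto
qed

lemma add_shifted_square_char2:
  fixes d x y :: "'a::comm_ring_1"
  assumes "(1::'a) + 1 = 0"
  shows "(x + y) * (x + y + d) = x * (x + d) + y * (y + d)"
proof -
  have "(x + y) * (x + y + d) = x * (x + d) + y * (y + d) + (x * y + x * y)"
    by (simp add: algebra_simps)
  then show ?thesis using add_self_eq_zero_char2[OF assms] by simp
qed

lemma add_eq_0_iff_eq_char2:
  fixes x y :: "'a::ring_1"
  assumes "(1::'a) + 1 = 0"
  shows "x + y = 0 \<longleftrightarrow> x = y"
  using add_self_eq_zero_char2[OF assms, of y] by (metis add_right_cancel)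

lemma shifted_square_eq_iff_char2:
  fixes d w x :: "'a::idom"
  assumes "(1::'a) + 1 = 0"
  shows "w * (w + d) = x * (x + d) \<longleftrightarrow> w = x \<or> w = x + d"
proof -
  have "w + x + x = w"
    using add_self_eq_zero_char2[OF assms, of x] by (simp add: add.assoc)
  then have "w * (w + d) = (w + x) * (w + x + d) + x * (x + d)"
    using add_shifted_square_char2[OF assms, of "w + x" x d] by (simp only:)
  then have "w * (w + d) = x * (x + d) \<longleftrightarrow> (w + x) * (w + x + d) = 0"
    by (metis add_0 add_right_cancel)
  also have "\<dots> \<longleftrightarrow> w = x \<or> w = x + d"
    using add_eq_0_iff_eq_char2[OF assms] by (simp add: add.assoc)
  finally show ?thesis .
qed

lemma card_range_two_to_one:
  fixes f :: "'a::finite \<Rightarrow> 'b"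
  assumes "\<And>x. card (f -` {f x}) = 2"
  shows "2 * card (range f) = card (UNIV :: 'a set)"
proof -
  have "(\<Union>y\<in>range f. f -` {y}) = UNIV" by auto
  then have "card (UNIV :: 'a set) = card (\<Union>y\<in>range f. f -` {y})" by simp
  also have "\<dots> = (\<Sum>y\<in>range f. card (f -` {y}))" by (rule card_UN_disjoint) auto
  also have "\<dots> = (\<Sum>y\<in>range f. 2)" using assms by (intro sum.cong) auto
  finally show ?thesis by simp
qed

theorem lemma3:
  fixes t :: nat and A :: "'a::{field,finite} set" and \<alpha>s :: 'a and z :: "nat \<Rightarrow> 'a"
  assumes "t \<ge> 1"
    and "(1::'a) + 1 = 0"
    and "card (UNIV :: 'a set) = 2 ^ t"
    and "\<alpha>s \<in> A"
    and "f2_basis (\<lambda>i. \<alpha>s - z i) t"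
  shows "\<forall>\<alpha>\<in>A - {\<alpha>s}.
           f2_rank ((\<lambda>i. (\<alpha>s - z i) * (\<alpha> - z i)) ` {1..t}) \<le> t - 1"
proof
  fix \<alpha> assume "\<alpha> \<in> A - {\<alpha>s}"
  define d where "d = \<alpha> - \<alpha>s"
  define L where "L x = x * (x + d)" for x
  have "d \<noteq> 0" using \<open>\<alpha> \<in> A - {\<alpha>s}\<close> by (simp add: d_def)
  have "L w = L x \<longleftrightarrow> w = x \<or> w = x + d" for w x
    unfolding L_def by (rule shifted_square_eq_iff_char2[OF assms(2)])
  then have "L -` {L x} = {x, x + d}" for x by blast
  moreover have "x \<noteq> x + d" for x using \<open>d \<noteq> 0\<close> by simp
  ultimately have "card (L -` {L x}) = 2" for x by (metis card_2_iff)
  then have "2 * card (range L) = 2 * 2 ^ (t - 1)"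
    using card_range_two_to_one[of L] assms(1,3) by (simp add: power_eq_if)
  then have "card (range L) \<le> 2 ^ (t - 1)" by simp
  moreover have "(\<alpha>s - z i) * (\<alpha> - z i) = L (\<alpha>s - z i)" for i
    by (simp add: L_def d_def)
  then have "(\<lambda>i. (\<alpha>s - z i) * (\<alpha> - z i)) ` {1..t} \<subseteq> range L" by auto
  moreover have "0 \<in> range L" by (metis L_def mult_zero_left rangeI)
  moreover have "a + b \<in> range L" if ab: "a \<in> range L" "b \<in> range L" for a b
  proof -
    obtain x y where "a = L x" "b = L y" using ab by blast
    then have "a + b = L (x + y)"
      unfolding L_def by (simp only: add_shifted_square_char2[OF assms(2)])
    then show ?thesis by simp
  qed
  ultimately show "f2_rank ((\<lambda>i. (\<alpha>s - z i) * (\<alpha> - z i)) ` {1..t}) \<le> t - 1"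
    by (rule f2_rank_le_of_subset_closed[OF assms(2)])
qed

end
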